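(* Let $n\ge0$ and let $H_n$ be the pyrene system with $n$ pyrene fragments. Then $$IDF(H_n)=\frac{\sqrt{2}}{32}(3-2\sqrt{2})^n+\frac{7-5\sqrt{2}}{8}n(3-2\sqrt{2})^n-\frac{\sqrt{2}}{32}(3+2\sqrt{2})^n+\frac{7+5\sqrt{2}}{8}n(3+2\sqrt{2})^n.$$
   Context: Pyrene system: draw the hexagonal lattice so that every hexagon has two vertical sides; horizontally adjacent hexagons then share a vertical edge. For $n\ge1$, $H_n$ is the hexagonal system (the plane graph formed by the vertices and edges of the following $4n$ hexagons) consisting of a horizontal linear row of $2n$ hexagons $h_{1,1},h_{1,2},\dots,h_{n,1},h_{n,2}$, consecutive ones sharing a vertical edge, together with, for each $i$, a hexagon $s_{i,1}$ directly above and a hexagon $s_{i,2}$ directly below the common edge of $h_{i,1}$ and $h_{i,2}$ (each sharing an edge with both $h_{i,1}$ and $h_{i,2}$). $H_0$ is the null graph, which has exactly one (empty) perfect matching with forcing number $0$. For a perfect matching $M$ of $G$, a forcing set is a subset $S\subseteq M$ contained in no other perfect matching of $G$, and the forcing number $f(G,M)$ is the minimum size of a forcing set. The degree of freedom $IDF(G)$ is $\sum_{M}f(G,M)$, summed over all perfect matchings $M$ of $G$. *)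

theory Defs
  imports Complex_Main
begin

(* Coordinates: a hexagon (with two vertical sides) centred at (cx,cy) has vertices
   (cx,cy+2),(cx+1,cy+1),(cx+1,cy-1),(cx,cy-2),(cx-1,cy-1),(cx-1,cy+1)
   (x scaled by 2/sqrt 3, y scaled by 2 of a unit hexagon).  Horizontally
   adjacent hexagons have centres differing by (2,0); they share a vertical edge. *)

definition hex_vertices :: "int \<times> int \<Rightarrow> (int \<times> int) set" where
  "hex_vertices c = (case c of (cx, cy) \<Rightarrow>
     {(cx, cy+2), (cx+1, cy+1), (cx+1, cy-1), (cx, cy-2), (cx-1, cy-1), (cx-1, cy+1)})"

definition hex_edges :: "int \<times> int \<Rightarrow> (int \<times> int) set set" where
  "hex_edges c = (case c of (cx, cy) \<Rightarrow>
     {{(cx, cy+2), (cx+1, cy+1)}, {(cx+1, cy+1), (cx+1, cy-1)},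
      {(cx+1, cy-1), (cx, cy-2)}, {(cx, cy-2), (cx-1, cy-1)},
      {(cx-1, cy-1), (cx-1, cy+1)}, {(cx-1, cy+1), (cx, cy+2)}})"

(* Hexagon centres of H_n (0-indexed fragments i < n):
   row hexagons h_{i+1,1}, h_{i+1,2} at (4i,0), (4i+2,0);
   s_{i+1,1} above and s_{i+1,2} below their common vertical edge (x = 4i+1):
   centres (4i+1, 3) and (4i+1, -3). *)
definition pyrene_hexagons :: "nat \<Rightarrow> (int \<times> int) set" where
  "pyrene_hexagons n =
     (\<Union>i\<in>{..<n}. {(4 * int i, 0), (4 * int i + 2, 0), (4 * int i + 1, 3), (4 * int i + 1, -3)})"

definition pyrene_V :: "nat \<Rightarrow> (int \<times> int) set" where
  "pyrene_V n = (\<Union>c\<in>pyrene_hexagons n. hex_vertices c)"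

definition pyrene_E :: "nat \<Rightarrow> (int \<times> int) set set" where
  "pyrene_E n = (\<Union>c\<in>pyrene_hexagons n. hex_edges c)"

definition perfect_matching :: "'a set \<Rightarrow> 'a set set \<Rightarrow> 'a set set \<Rightarrow> bool" where
  "perfect_matching V E M \<longleftrightarrow> M \<subseteq> E \<and> (\<forall>v\<in>V. \<exists>!e. e \<in> M \<and> v \<in> e)"

definition forcing_set :: "'a set \<Rightarrow> 'a set set \<Rightarrow> 'a set set \<Rightarrow> 'a set set \<Rightarrow> bool" where
  "forcing_set V E M S \<longleftrightarrow> S \<subseteq> M \<and>
     (\<forall>M'. perfect_matching V E M' \<and> S \<subseteq> M' \<longrightarrow> M' = M)"

definition forcing_number :: "'a set \<Rightarrow> 'a set set \<Rightarrow> 'a set set \<Rightarrow> nat" where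
  "forcing_number V E M = Min (card ` {S. forcing_set V E M S})"

definition IDF :: "'a set \<Rightarrow> 'a set set \<Rightarrow> nat" where
  "IDF V E = (\<Sum>M\<in>{M. perfect_matching V E M}. forcing_number V E M)"

end

(*
  A perfect matching M of H_n is determined by the states of its n pyrene fragments. Either both
  hexagons s_{j,1}, s_{j,2} of a fragment are M-alternating, each in one of its two perfect
  matchings, or one of the row hexagons h_{j,1}, h_{j,2} is M-alternating and absorbs the vertical
  edge it shares with the neighbouring fragment. The only restriction is that a fragment absorbing
  its right edge cannot be followed by one absorbing its left edge.

  Rotating one of these alternating hexagons gives another perfect matching that agrees with M off
  the hexagon. As the alternating hexagons of all fragments are pairwise disjoint, every forcing set
  contains a matched edge of each of them, and one such edge per hexagon already forces M. Hence
  f(H_n, M) is 2 per fragment of the first kind plus 1 per other fragment, and summing over the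
  admissible state sequences leads to a linear recurrence with characteristic roots 3 +- 2 sqrt 2.
*)

theory Submission
  imports Defs
begin

section \<open>Perfect matchings and forcing sets\<close>

lemma perfect_matching_subset: "perfect_matching V E M \<Longrightarrow> M \<subseteq> E"
  unfolding perfect_matching_def by (rule conjunct1)

lemma perfect_matching_ex1:
  assumes "perfect_matching V E M" "v \<in> V"
  shows "\<exists>!e. e \<in> M \<and> v \<in> e"
  using assms unfolding perfect_matching_def by blast

lemma perfect_matching_unique_at:
  assumes "perfect_matching V E M" "v \<in> V" "e \<in> M" "e' \<in> M" "v \<in> e" "v \<in> e'"
  shows "e = e'"
  using perfect_matching_ex1[OF assms(1,2)] assms(3-) by blast

lemma perfect_matching_subset_eq:
  assumes "perfect_matching V E M" "perfect_matching V E M'" "M' \<subseteq> M"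
    and "\<forall>e\<in>E. e \<inter> V \<noteq> {}"
  shows "M' = M"
proof
  show "M \<subseteq> M'"
  proof
    fix e assume "e \<in> M"
    then obtain v where v: "v \<in> e" "v \<in> V"
      using perfect_matching_subset[OF assms(1)] assms(4) by blast
    then obtain e' where "e' \<in> M'" "v \<in> e'"
      using perfect_matching_ex1[OF assms(2)] by blast
    with \<open>e \<in> M\<close> v assms(3) show "e \<in> M'"
      using perfect_matching_unique_at[OF assms(1) v(2)] by blast
  qed
qed (rule assms(3))

definition exactly_one_in :: "'a set \<Rightarrow> 'a list \<Rightarrow> bool" where
  "exactly_one_in M xs \<longleftrightarrow> length (filter (\<lambda>x. x \<in> M) xs) = 1"

lemma exactly_one_in_simps:
  "exactly_one_in M [a, b] \<longleftrightarrow> (a \<in> M \<longleftrightarrow> b \<notin> M)"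
  "exactly_one_in M [a, b, c] \<longleftrightarrow>
     a \<in> M \<and> b \<notin> M \<and> c \<notin> M \<or> a \<notin> M \<and> b \<in> M \<and> c \<notin> M \<or> a \<notin> M \<and> b \<notin> M \<and> c \<in> M"
  by (auto simp: exactly_one_in_def)

lemma perfect_matching_exactly_one:
  assumes pm: "perfect_matching V E M" and v: "v \<in> V" and "distinct es" "\<forall>e\<in>set es. v \<in> e"
    and "\<forall>e\<in>E. v \<in> e \<longrightarrow> e \<in> set es"
  shows "exactly_one_in M es"
proof -
  obtain e where e: "e \<in> M" "v \<in> e"
    using perfect_matching_ex1[OF pm v] by blast
  then have "e \<in> set es"
    using perfect_matching_subset[OF pm] assms(5) by blast
  with e have "set (filter (\<lambda>x. x \<in> M) es) = {e}"
    using assms(4) perfect_matching_unique_at[OF pm v] by auto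
  then have "length (filter (\<lambda>x. x \<in> M) es) = card {e}"
    by (simp only: distinct_card[OF distinct_filter[OF \<open>distinct es\<close>], symmetric])
  then show ?thesis
    unfolding exactly_one_in_def by simp
qed

lemma forcing_set_meets:
  assumes "forcing_set V E M S" "perfect_matching V E M'" "M' \<noteq> M" "M - D \<subseteq> M'"
  shows "S \<inter> D \<noteq> {}"
  using assms unfolding forcing_set_def by blast

lemma card_le_forcing_set:
  assumes "finite S" "forcing_set V E M S" "finite K"
    and disjoint: "\<forall>k\<in>K. \<forall>k'\<in>K. k \<noteq> k' \<longrightarrow> D k \<inter> D k' = {}"
    and alternative: "\<And>k. k \<in> K \<Longrightarrow> \<exists>M'. perfect_matching V E M' \<and> M' \<noteq> M \<and> M - D k \<subseteq> M'"
  shows "card K \<le> card S"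
proof -
  have "card K = (\<Sum>k\<in>K. 1)"
    by simp
  also have "\<dots> \<le> (\<Sum>k\<in>K. card (S \<inter> D k))"
  proof (rule sum_mono)
    fix k assume "k \<in> K"
    then have "S \<inter> D k \<noteq> {}"
      using alternative forcing_set_meets[OF assms(2)] by blast
    with \<open>finite S\<close> show "1 \<le> card (S \<inter> D k)"
      by (simp add: Suc_leI card_gt_0_iff)
  qed
  also have "\<dots> = card (\<Union>k\<in>K. S \<inter> D k)"
    using disjoint \<open>finite S\<close> \<open>finite K\<close> by (intro card_UN_disjoint[symmetric]) auto
  also have "\<dots> \<le> card S"
    using \<open>finite S\<close> by (intro card_mono) auto
  finally show ?thesis .
qed

lemma forcing_number_eqI:
  assumes "finite M" "forcing_set V E M S" "\<And>S'. forcing_set V E M S' \<Longrightarrow> card S \<le> card S'"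
  shows "forcing_number V E M = card S"
proof -
  have "{S. forcing_set V E M S} \<subseteq> Pow M"
    unfolding forcing_set_def by blast
  then have "finite {S. forcing_set V E M S}"
    using \<open>finite M\<close> by (rule finite_subset[OF _ finite_Pow_iff[THEN iffD2]])
  then show ?thesis
    unfolding forcing_number_def using assms(2,3) by (intro Min_eqI) auto
qed

section \<open>Coordinates of the pyrene chain\<close>

(* Sites of fragment j, which consists of h_{j+1,1}, h_{j+1,2}, s_{j+1,1}, s_{j+1,2}: AP and AM
   are the ends of the left vertical edge of h_{j+1,1}, CP and CM those of the edge shared by
   h_{j+1,1} and h_{j+1,2}, and T1, ..., T5 (U1, ..., U5) run around s_{j+1,1} (s_{j+1,2}) from
   h_{j+1,1} to h_{j+1,2}. The vertical edge {pos AP k, pos AM k} is the junction of fragments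
   k - 1 and k. *)
datatype site = AP | AM | T1 | T2 | T3 | T4 | T5 | CP | U1 | U2 | U3 | U4 | U5 | CM

fun pos :: "site \<Rightarrow> nat \<Rightarrow> int \<times> int" where
  "pos AP j = (4 * int j - 1, 1)"
| "pos AM j = (4 * int j - 1, -1)"
| "pos T1 j = (4 * int j, 2)"
| "pos T2 j = (4 * int j, 4)"
| "pos T3 j = (4 * int j + 1, 5)"
| "pos T4 j = (4 * int j + 2, 4)"
| "pos T5 j = (4 * int j + 2, 2)"
| "pos CP j = (4 * int j + 1, 1)"
| "pos U1 j = (4 * int j, -2)"
| "pos U2 j = (4 * int j, -4)"
| "pos U3 j = (4 * int j + 1, -5)"
| "pos U4 j = (4 * int j + 2, -4)"
| "pos U5 j = (4 * int j + 2, -2)"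
| "pos CM j = (4 * int j + 1, -1)"

lemma pos_eq_iff [simp]: "pos a i = pos b j \<longleftrightarrow> a = b \<and> i = j"
  by (cases a; cases b) (auto, presburger+)

declare pos.simps [simp del]
declare doubleton_eq_iff [simp]

definition fragment_edges :: "nat \<Rightarrow> (int \<times> int) set set" where
  "fragment_edges j =
    {{pos AP j, pos AM j}, {pos AP j, pos T1 j}, {pos AM j, pos U1 j}, {pos T1 j, pos CP j},
     {pos CP j, pos CM j}, {pos U1 j, pos CM j}, {pos CP j, pos T5 j}, {pos CM j, pos U5 j},
     {pos T5 j, pos AP (Suc j)}, {pos U5 j, pos AM (Suc j)}, {pos AP (Suc j), pos AM (Suc j)},
     {pos T1 j, pos T2 j}, {pos T2 j, pos T3 j}, {pos T3 j, pos T4 j}, {pos T4 j, pos T5 j},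
     {pos U1 j, pos U2 j}, {pos U2 j, pos U3 j}, {pos U3 j, pos U4 j}, {pos U4 j, pos U5 j}}"

definition fragment_vertices :: "nat \<Rightarrow> (int \<times> int) set" where
  "fragment_vertices j =
    {pos AP j, pos AM j, pos T1 j, pos T2 j, pos T3 j, pos T4 j, pos T5 j, pos CP j,
     pos U1 j, pos U2 j, pos U3 j, pos U4 j, pos U5 j, pos CM j, pos AP (Suc j), pos AM (Suc j)}"

lemma pyrene_E_eq: "pyrene_E n = (\<Union>j<n. fragment_edges j)"
proof -
  have "(\<Union>c\<in>{(4 * int j, 0), (4 * int j + 2, 0), (4 * int j + 1, 3), (4 * int j + 1, -3)}. hex_edges c)
     = fragment_edges j" for j
    unfolding fragment_edges_def hex_edges_def by (auto simp: pos.simps insert_commute algebra_simps)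
  then show ?thesis unfolding pyrene_E_def pyrene_hexagons_def by auto
qed

lemma pyrene_V_eq: "pyrene_V n = (\<Union>j<n. fragment_vertices j)"
proof -
  have "(\<Union>c\<in>{(4 * int j, 0), (4 * int j + 2, 0), (4 * int j + 1, 3), (4 * int j + 1, -3)}. hex_vertices c)
     = fragment_vertices j" for j
    unfolding fragment_vertices_def hex_vertices_def by (auto simp: pos.simps insert_commute algebra_simps)
  then show ?thesis unfolding pyrene_V_def pyrene_hexagons_def by auto
qed

lemma pos_in_pyrene_V: "j < n \<Longrightarrow> pos X j \<in> pyrene_V n"
  unfolding pyrene_V_eq fragment_vertices_def by (cases X) force+

lemma junction_in_pyrene_V:
  "k \<le> n \<Longrightarrow> 0 < n \<Longrightarrow> pos AP k \<in> pyrene_V n \<and> pos AM k \<in> pyrene_V n"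
  unfolding pyrene_V_eq fragment_vertices_def by (cases k) force+

lemma fragment_vertices_cases:
  assumes "v \<in> fragment_vertices j"
  obtains X where "X \<noteq> AP" "X \<noteq> AM" "v = pos X j"
    | k where "v = pos AP k \<or> v = pos AM k" "k = j \<or> k = Suc j"
  using assms unfolding fragment_vertices_def by blast

lemma pyrene_E_meets_V: "\<forall>e\<in>pyrene_E n. e \<inter> pyrene_V n \<noteq> {}"
proof
  fix e assume "e \<in> pyrene_E n"
  then obtain j where "j < n" "e \<in> fragment_edges j"
    unfolding pyrene_E_eq by blast
  moreover have "e \<inter> fragment_vertices j \<noteq> {}" if "e \<in> fragment_edges j" for e
    using that unfolding fragment_edges_def fragment_vertices_def by auto
  ultimately show "e \<inter> pyrene_V n \<noteq> {}"
    unfolding pyrene_V_eq by blast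
qed

(* For j = 0 the last edge listed at AP and AM is not an edge of H_n (0 - 1 = 0 in nat); it
   contains the site all the same, which is all the matching constraints need. *)
fun incident :: "site \<Rightarrow> nat \<Rightarrow> (int \<times> int) set list" where
  "incident AP j = [{pos AP j, pos AM j}, {pos AP j, pos T1 j}, {pos T5 (j - 1), pos AP j}]"
| "incident AM j = [{pos AP j, pos AM j}, {pos AM j, pos U1 j}, {pos U5 (j - 1), pos AM j}]"
| "incident T1 j = [{pos AP j, pos T1 j}, {pos T1 j, pos CP j}, {pos T1 j, pos T2 j}]"
| "incident T2 j = [{pos T1 j, pos T2 j}, {pos T2 j, pos T3 j}]"
| "incident T3 j = [{pos T2 j, pos T3 j}, {pos T3 j, pos T4 j}]"
| "incident T4 j = [{pos T3 j, pos T4 j}, {pos T4 j, pos T5 j}]"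
| "incident T5 j = [{pos T4 j, pos T5 j}, {pos CP j, pos T5 j}, {pos T5 j, pos AP (Suc j)}]"
| "incident CP j = [{pos T1 j, pos CP j}, {pos CP j, pos CM j}, {pos CP j, pos T5 j}]"
| "incident U1 j = [{pos AM j, pos U1 j}, {pos U1 j, pos CM j}, {pos U1 j, pos U2 j}]"
| "incident U2 j = [{pos U1 j, pos U2 j}, {pos U2 j, pos U3 j}]"
| "incident U3 j = [{pos U2 j, pos U3 j}, {pos U3 j, pos U4 j}]"
| "incident U4 j = [{pos U3 j, pos U4 j}, {pos U4 j, pos U5 j}]"
| "incident U5 j = [{pos U4 j, pos U5 j}, {pos CM j, pos U5 j}, {pos U5 j, pos AM (Suc j)}]"
| "incident CM j = [{pos U1 j, pos CM j}, {pos CP j, pos CM j}, {pos CM j, pos U5 j}]"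

lemma pyrene_E_incident:
  assumes "e \<in> pyrene_E n" "pos X j \<in> e"
  shows "e \<in> set (incident X j)"
proof -
  obtain i where "e \<in> fragment_edges i"
    using assms(1) unfolding pyrene_E_eq by blast
  with assms(2) show ?thesis
    unfolding fragment_edges_def by (simp only: insert_iff empty_iff; elim disjE; auto)
qed

lemma pyrene_E_interior_index:
  assumes "e \<in> pyrene_E n" "pos X j \<in> e" "X \<noteq> AP" "X \<noteq> AM"
  shows "j < n"
proof -
  obtain i where "i < n" "e \<in> fragment_edges i"
    using assms(1) unfolding pyrene_E_eq by blast
  moreover from this(2) assms(2-4) have "j = i"
    unfolding fragment_edges_def by (simp only: insert_iff empty_iff; elim disjE; auto)
  ultimately show ?thesis by simp
qed

lemma perfect_matching_incident:
  assumes "perfect_matching (pyrene_V n) (pyrene_E n) M" "pos X j \<in> pyrene_V n"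
  shows "exactly_one_in M (incident X j)"
proof (rule perfect_matching_exactly_one[OF assms])
  show "distinct (incident X j)" "\<forall>e\<in>set (incident X j). pos X j \<in> e"
    by (cases X; simp)+
qed (use pyrene_E_incident in blast)

lemma all_site: "(\<forall>X. P X) \<longleftrightarrow>
    P AP \<and> P AM \<and> P T1 \<and> P T2 \<and> P T3 \<and> P T4 \<and> P T5 \<and> P CP \<and> P U1 \<and> P U2 \<and> P U3 \<and> P U4 \<and> P U5 \<and> P CM"
proof (intro iffI allI)
  fix X
  assume "P AP \<and> P AM \<and> P T1 \<and> P T2 \<and> P T3 \<and> P T4 \<and> P T5 \<and> P CP \<and> P U1 \<and> P U2 \<and> P U3 \<and> P U4 \<and> P U5 \<and> P CM"
  then show "P X" by (cases X) simp_all
qed simp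

lemma fragment_constraints:
  assumes pm: "perfect_matching (pyrene_V n) (pyrene_E n) M" and "j < n"
  shows "\<forall>X. exactly_one_in M (incident X j)"
    and "exactly_one_in M (incident AP (Suc j))" "exactly_one_in M (incident AM (Suc j))"
proof -
  have "Suc j \<le> n" "0 < n"
    using \<open>j < n\<close> by simp_all
  then show "\<forall>X. exactly_one_in M (incident X j)"
    and "exactly_one_in M (incident AP (Suc j))" "exactly_one_in M (incident AM (Suc j))"
    using perfect_matching_incident[OF pm] pos_in_pyrene_V junction_in_pyrene_V \<open>j < n\<close>
    by blast+
qed

section \<open>Fragment states\<close>

(* Cut t b: s_{j+1,1} and s_{j+1,2} are alternating, t and b choosing their matched edges;
   Left_sextet / Right_sextet: h_{j+1,1} / h_{j+1,2} carries three matched edges, absorbing the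
   junction with the previous / next fragment. *)
datatype state = Cut bool bool | Left_sextet | Right_sextet

lemma state_cases:
  obtains "c = Cut False False" | "c = Cut False True" | "c = Cut True False" | "c = Cut True True"
    | "c = Left_sextet" | "c = Right_sextet"
  by (cases c) auto

lemma all_state: "(\<forall>c. P c) \<longleftrightarrow>
    P (Cut False False) \<and> P (Cut False True) \<and> P (Cut True False) \<and> P (Cut True True) \<and>
    P Left_sextet \<and> P Right_sextet"
proof (intro iffI allI)
  fix c
  assume "P (Cut False False) \<and> P (Cut False True) \<and> P (Cut True False) \<and> P (Cut True True) \<and>
    P Left_sextet \<and> P Right_sextet"
  then show "P c" by (cases c rule: state_cases) simp_all
qed simp

definition top_half :: "bool \<Rightarrow> nat \<Rightarrow> (int \<times> int) set set" where
  "top_half t j = (if t then {{pos CP j, pos T5 j}, {pos T1 j, pos T2 j}, {pos T3 j, pos T4 j}}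
                   else {{pos T1 j, pos CP j}, {pos T2 j, pos T3 j}, {pos T4 j, pos T5 j}})"

definition bottom_half :: "bool \<Rightarrow> nat \<Rightarrow> (int \<times> int) set set" where
  "bottom_half b j = (if b then {{pos CM j, pos U5 j}, {pos U1 j, pos U2 j}, {pos U3 j, pos U4 j}}
                      else {{pos U1 j, pos CM j}, {pos U2 j, pos U3 j}, {pos U4 j, pos U5 j}})"

fun state_edges :: "state \<Rightarrow> nat \<Rightarrow> (int \<times> int) set set" where
  "state_edges (Cut t b) j = top_half t j \<union> bottom_half b j"
| "state_edges Left_sextet j =
     {{pos AP j, pos T1 j}, {pos CP j, pos CM j}, {pos AM j, pos U1 j},
      {pos T2 j, pos T3 j}, {pos T4 j, pos T5 j}, {pos U2 j, pos U3 j}, {pos U4 j, pos U5 j}}"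
| "state_edges Right_sextet j =
     {{pos T5 j, pos AP (Suc j)}, {pos CP j, pos CM j}, {pos U5 j, pos AM (Suc j)},
      {pos T1 j, pos T2 j}, {pos T3 j, pos T4 j}, {pos U1 j, pos U2 j}, {pos U3 j, pos U4 j}}"

fun state_key :: "state \<Rightarrow> nat \<Rightarrow> (int \<times> int) set set" where
  "state_key (Cut t b) j =
     {if t then {pos CP j, pos T5 j} else {pos T1 j, pos CP j},
      if b then {pos CM j, pos U5 j} else {pos U1 j, pos CM j}}"
| "state_key Left_sextet j = {{pos AP j, pos T1 j}}"
| "state_key Right_sextet j = {{pos T5 j, pos AP (Suc j)}}"

lemma state_key_subset: "state_key c j \<subseteq> state_edges c j"
  by (cases c) (auto simp: top_half_def bottom_half_def)

lemma state_edges_subset_fragment: "state_edges c j \<subseteq> fragment_edges j"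
  by (cases c) (auto simp: fragment_edges_def top_half_def bottom_half_def)

lemma state_edges_cover:
  assumes "X \<noteq> AP" "X \<noteq> AM"
  shows "\<exists>e\<in>state_edges c j. pos X j \<in> e"
  using assms by (cases c rule: state_cases; cases X) (simp_all add: top_half_def bottom_half_def)

lemma state_edges_unique:
  assumes "e \<in> state_edges c j" "e' \<in> state_edges c j" "v \<in> e" "v \<in> e'"
  shows "e = e'"
proof -
  have "\<forall>e\<in>state_edges c j. \<forall>e'\<in>state_edges c j. e \<noteq> e' \<longrightarrow> e \<inter> e' = {}"
    by (cases c rule: state_cases) (simp_all add: top_half_def bottom_half_def)
  with assms show ?thesis by blast
qed

lemma state_edges_vertex:
  assumes "e \<in> state_edges c j" "v \<in> e"
  shows "(\<exists>X. X \<noteq> AP \<and> X \<noteq> AM \<and> v = pos X j) \<or>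
         c = Left_sextet \<and> (v = pos AP j \<or> v = pos AM j) \<or>
         c = Right_sextet \<and> (v = pos AP (Suc j) \<or> v = pos AM (Suc j))"
  using assms by (cases c rule: state_cases) (auto simp: top_half_def bottom_half_def)

lemma state_edges_disjoint:
  assumes "j \<noteq> j'"
  shows "state_edges c j \<inter> state_edges c' j' = {}"
proof -
  have "\<exists>X. X \<noteq> AP \<and> X \<noteq> AM \<and> pos X j \<in> e" if "e \<in> state_edges c j" for e
    using that by (cases c rule: state_cases) (auto simp: top_half_def bottom_half_def)
  with state_edges_vertex[of _ c' j'] assms show ?thesis by fastforce
qed

definition aligned_junction :: "(int \<times> int) set set \<Rightarrow> nat \<Rightarrow> bool" where
  "aligned_junction M k \<longleftrightarrow>
     {pos AP k, pos AM k} \<in> M \<or>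
     {pos AP k, pos T1 k} \<in> M \<and> {pos AM k, pos U1 k} \<in> M \<or>
     0 < k \<and> {pos T5 (k - 1), pos AP k} \<in> M \<and> {pos U5 (k - 1), pos AM k} \<in> M"

lemma aligned_junction_Suc:
  assumes pm: "perfect_matching (pyrene_V n) (pyrene_E n) M" and j: "j < n"
    and "aligned_junction M j"
  shows "aligned_junction M (Suc j)"
  using fragment_constraints[OF pm j, unfolded all_site incident.simps exactly_one_in_simps]
    \<open>aligned_junction M j\<close>
  unfolding aligned_junction_def
  by (simp only: diff_Suc_1 zero_less_Suc simp_thms) sat

lemma aligned_junction_0:
  assumes pm: "perfect_matching (pyrene_V n) (pyrene_E n) M" and "0 < n"
  shows "aligned_junction M 0"
proof -
  have "{pos T5 0, pos AP 0} \<notin> pyrene_E n" "{pos U5 0, pos AM 0} \<notin> pyrene_E n"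
    using pyrene_E_incident[of "{pos T5 0, pos AP 0}" n T5 0]
      pyrene_E_incident[of "{pos U5 0, pos AM 0}" n U5 0] by auto
  then have "{pos T5 0, pos AP 0} \<notin> M" "{pos U5 0, pos AM 0} \<notin> M"
    using perfect_matching_subset[OF pm] by auto
  moreover have "exactly_one_in M (incident AP 0)" "exactly_one_in M (incident AM 0)"
    using perfect_matching_incident[OF pm] junction_in_pyrene_V[OF _ \<open>0 < n\<close>] by blast+
  ultimately show ?thesis
    unfolding aligned_junction_def incident.simps exactly_one_in_simps by auto
qed

lemma aligned_junctions:
  assumes "perfect_matching (pyrene_V n) (pyrene_E n) M" "k \<le> n" "0 < n"
  shows "aligned_junction M k"
  using assms(2)
proof (induction k)
  case 0
  show ?case using aligned_junction_0 assms(1,3) .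
next
  case (Suc k)
  then show ?case using aligned_junction_Suc[OF assms(1)] by simp
qed

lemma state_exists:
  assumes pm: "perfect_matching (pyrene_V n) (pyrene_E n) M" and j: "j < n"
  shows "\<exists>c. state_edges c j \<subseteq> M"
proof -
  have "aligned_junction M j"
    using aligned_junctions[OF pm] j by simp
  then have "(top_half False j \<subseteq> M \<or> top_half True j \<subseteq> M) \<and>
        (bottom_half False j \<subseteq> M \<or> bottom_half True j \<subseteq> M) \<or>
        state_edges Left_sextet j \<subseteq> M \<or> state_edges Right_sextet j \<subseteq> M"
    using fragment_constraints[OF pm j, unfolded all_site incident.simps exactly_one_in_simps]
    unfolding aligned_junction_def top_half_def bottom_half_def state_edges.simps if_True if_False
    by (simp only: insert_subset empty_subsetI simp_thms) sat
  then consider t b where "top_half t j \<subseteq> M" "bottom_half b j \<subseteq> M"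
    | "state_edges Left_sextet j \<subseteq> M" | "state_edges Right_sextet j \<subseteq> M"
    by blast
  then show ?thesis
  proof cases
    case (1 t b)
    then have "state_edges (Cut t b) j \<subseteq> M" by simp
    then show ?thesis ..
  qed blast+
qed

lemma state_key_determines:
  assumes pm: "perfect_matching (pyrene_V n) (pyrene_E n) M" and j: "j < n"
    and "state_key c j \<subseteq> M" "state_edges c' j \<subseteq> M"
  shows "c = c'"
proof -
  have "\<forall>c c'. state_key c j \<subseteq> M \<longrightarrow> state_edges c' j \<subseteq> M \<longrightarrow> c = c'"
    using fragment_constraints(1)[OF pm j, unfolded all_site incident.simps exactly_one_in_simps]
    unfolding all_state state_key.simps state_edges.simps top_half_def bottom_half_def
    by (simp only: if_True if_False insert_subset empty_subsetI Un_subset_iff Un_insert_left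
        Un_empty_left state.distinct state.inject simp_thms) (intro conjI impI; sat)
  with assms(3,4) show ?thesis by blast
qed

lemma state_edges_determine:
  assumes "perfect_matching (pyrene_V n) (pyrene_E n) M" "j < n"
    and "state_edges c j \<subseteq> M" "state_edges c' j \<subseteq> M"
  shows "c = c'"
  using state_key_determines[OF assms(1,2) _ assms(4)] state_key_subset assms(3) by blast

definition state_of :: "(int \<times> int) set set \<Rightarrow> nat \<Rightarrow> state" where
  "state_of M j = (THE c. state_edges c j \<subseteq> M)"

lemma state_of_eq:
  assumes "perfect_matching (pyrene_V n) (pyrene_E n) M" "j < n" "state_edges c j \<subseteq> M"
  shows "state_of M j = c"
  unfolding state_of_def
proof (rule the_equality)
  show "c' = c" if "state_edges c' j \<subseteq> M" for c'
    using state_edges_determine[OF assms(1,2) that assms(3)] .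
qed (rule assms(3))

lemma state_of_subset:
  assumes "perfect_matching (pyrene_V n) (pyrene_E n) M" "j < n"
  shows "state_edges (state_of M j) j \<subseteq> M"
proof -
  obtain c where "state_edges c j \<subseteq> M"
    using state_exists[OF assms] by blast
  with state_of_eq[OF assms this] show ?thesis by simp
qed

section \<open>Perfect matchings as admissible codes\<close>

lemma successively_iff_nth:
  "successively P xs \<longleftrightarrow> (\<forall>i. Suc i < length xs \<longrightarrow> P (xs ! i) (xs ! Suc i))"
proof (induction xs)
  case (Cons x xs)
  show ?case
  proof (cases xs)
    case (Cons y ys)
    have "(\<forall>i. Suc i < length (x # xs) \<longrightarrow> P ((x # xs) ! i) ((x # xs) ! Suc i)) \<longleftrightarrow>
          P x y \<and> (\<forall>i. Suc i < length xs \<longrightarrow> P (xs ! i) (xs ! Suc i))"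
      using Cons by (auto simp: nth_Cons split: nat.split)
    with Cons.IH show ?thesis
      unfolding Cons by simp
  qed simp
qed simp

definition admissible :: "state list \<Rightarrow> bool" where
  "admissible = successively (\<lambda>c d. c = Right_sextet \<longrightarrow> d \<noteq> Left_sextet)"

lemma admissible_nth:
  "admissible cs \<Longrightarrow> Suc j < length cs \<Longrightarrow> cs ! j = Right_sextet \<Longrightarrow> cs ! Suc j \<noteq> Left_sextet"
  unfolding admissible_def successively_iff_nth by blast

(* The empty code has no junctions at all, as H_0 has no vertices. *)
definition free_junction :: "state list \<Rightarrow> nat \<Rightarrow> bool" where
  "free_junction cs k \<longleftrightarrow> cs \<noteq> [] \<and> k \<le> length cs \<and>
     \<not> (k < length cs \<and> cs ! k = Left_sextet) \<and> \<not> (0 < k \<and> cs ! (k - 1) = Right_sextet)"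

definition matching_of :: "state list \<Rightarrow> (int \<times> int) set set" where
  "matching_of cs = (\<Union>j<length cs. state_edges (cs ! j) j) \<union>
     (\<lambda>k. {pos AP k, pos AM k}) ` {k. free_junction cs k}"

lemma matching_of_subset: "matching_of cs \<subseteq> pyrene_E (length cs)"
proof -
  have "{pos AP k, pos AM k} \<in> pyrene_E (length cs)" if "free_junction cs k" for k
  proof (cases "k < length cs")
    case True
    have "{pos AP k, pos AM k} \<in> fragment_edges k"
      unfolding fragment_edges_def by simp
    with True show ?thesis unfolding pyrene_E_eq by blast
  next
    case False
    with that have "k = Suc (length cs - 1)" "length cs - 1 < length cs"
      unfolding free_junction_def by auto
    moreover have "{pos AP (Suc i), pos AM (Suc i)} \<in> fragment_edges i" for i
      unfolding fragment_edges_def by simp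
    ultimately show ?thesis unfolding pyrene_E_eq by (metis UN_I lessThan_iff)
  qed
  moreover have "state_edges (cs ! j) j \<subseteq> pyrene_E (length cs)" if "j < length cs" for j
    using that state_edges_subset_fragment unfolding pyrene_E_eq by blast
  ultimately show ?thesis unfolding matching_of_def by blast
qed

lemma finite_matching_of: "finite (matching_of cs)"
proof (rule finite_subset[OF matching_of_subset])
  show "finite (pyrene_E (length cs))"
    unfolding pyrene_E_eq fragment_edges_def by simp
qed

lemma state_edges_subset_matching_of:
  "j < length cs \<Longrightarrow> state_edges (cs ! j) j \<subseteq> matching_of cs"
  unfolding matching_of_def by blast

lemma matching_of_covers_junction:
  assumes "v = pos AP k \<or> v = pos AM k" "k \<le> length cs" "cs \<noteq> []"
  shows "\<exists>e\<in>matching_of cs. v \<in> e"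
proof -
  consider "k < length cs" "cs ! k = Left_sextet" | "0 < k" "cs ! (k - 1) = Right_sextet"
    | "free_junction cs k"
    using assms(2,3) unfolding free_junction_def by blast
  then show ?thesis
  proof cases
    case 1
    then have "state_edges Left_sextet k \<subseteq> matching_of cs"
      using state_edges_subset_matching_of by metis
    with assms(1) show ?thesis by auto
  next
    case 2
    then have "state_edges Right_sextet (k - 1) \<subseteq> matching_of cs"
      using state_edges_subset_matching_of[of "k - 1" cs] assms(2) by simp
    with assms(1) \<open>0 < k\<close> show ?thesis by auto
  next
    case 3
    then have "{pos AP k, pos AM k} \<in> matching_of cs"
      unfolding matching_of_def by blast
    with assms(1) show ?thesis by auto
  qed
qed

lemma matching_of_covers:
  assumes "v \<in> pyrene_V (length cs)"
  shows "\<exists>e\<in>matching_of cs. v \<in> e"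
proof -
  obtain j where j: "j < length cs" "v \<in> fragment_vertices j"
    using assms unfolding pyrene_V_eq by blast
  from j(2) show ?thesis
  proof (cases rule: fragment_vertices_cases)
    case 1
    then obtain e where "e \<in> state_edges (cs ! j) j" "v \<in> e"
      using state_edges_cover by blast
    then show ?thesis
      using state_edges_subset_matching_of[OF j(1)] by blast
  next
    case (2 k)
    moreover have "k \<le> length cs" "cs \<noteq> []"
      using 2 j(1) by auto
    ultimately show ?thesis using matching_of_covers_junction by blast
  qed
qed

lemma matching_of_unique:
  assumes "admissible cs" "e \<in> matching_of cs" "e' \<in> matching_of cs" "v \<in> e" "v \<in> e'"
  shows "e = e'"
proof -
  have states: "e = e'"
    if "e \<in> state_edges (cs ! i) i" "e' \<in> state_edges (cs ! i') i'" "i < length cs" "i' < length cs"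
      "v \<in> e" "v \<in> e'" for e e' i i'
  proof (cases "i = i'")
    case True
    with that show ?thesis using state_edges_unique by blast
  next
    case False
    with state_edges_vertex[OF that(1,5)] state_edges_vertex[OF that(2,6)]
    have "i' = Suc i \<and> cs ! i = Right_sextet \<and> cs ! i' = Left_sextet \<or>
          i = Suc i' \<and> cs ! i' = Right_sextet \<and> cs ! i = Left_sextet"
      by auto
    with admissible_nth[OF assms(1)] that(3,4) show ?thesis by auto
  qed
  have mixed: False
    if "e \<in> state_edges (cs ! i) i" "i < length cs" "free_junction cs k" "v \<in> e"
      "v \<in> {pos AP k, pos AM k}" for e i k
    using state_edges_vertex[OF that(1,4)] that(2,3,5) unfolding free_junction_def by auto
  from assms(2,3,4,5) show ?thesis
    unfolding matching_of_def
    by (elim UnE UN_E imageE CollectE; simp only: lessThan_iff)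
      (auto dest: states mixed)
qed

lemma perfect_matching_matching_of:
  assumes "admissible cs" "length cs = n"
  shows "perfect_matching (pyrene_V n) (pyrene_E n) (matching_of cs)"
  unfolding perfect_matching_def
  using matching_of_subset matching_of_covers matching_of_unique[OF assms(1)] assms(2)
  by metis

definition code_of :: "nat \<Rightarrow> (int \<times> int) set set \<Rightarrow> state list" where
  "code_of n M = map (state_of M) [0..<n]"

lemma length_code_of [simp]: "length (code_of n M) = n"
  unfolding code_of_def by simp

lemma code_of_admissible:
  assumes pm: "perfect_matching (pyrene_V n) (pyrene_E n) M"
  shows "admissible (code_of n M)"
  unfolding admissible_def successively_iff_nth
proof (intro allI impI)
  fix i assume i: "Suc i < length (code_of n M)" "code_of n M ! i = Right_sextet"
  then have "state_edges Right_sextet i \<subseteq> M"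
    using state_of_subset[OF pm, of i] unfolding code_of_def by simp
  moreover have "exactly_one_in M (incident AP (Suc i))"
    using fragment_constraints(2)[OF pm, of i] i(1) unfolding code_of_def by simp
  ultimately have "{pos AP (Suc i), pos T1 (Suc i)} \<notin> M"
    unfolding exactly_one_in_simps incident.simps by auto
  then have "state_of M (Suc i) \<noteq> Left_sextet"
    using state_of_subset[OF pm, of "Suc i"] i(1) unfolding code_of_def by auto
  with i(1) show "code_of n M ! Suc i \<noteq> Left_sextet"
    unfolding code_of_def by simp
qed

lemma free_junction_code_of:
  assumes pm: "perfect_matching (pyrene_V n) (pyrene_E n) M" and free: "free_junction (code_of n M) k"
  shows "{pos AP k, pos AM k} \<in> M"
proof -
  have k: "k \<le> n" "0 < n"
    using free unfolding free_junction_def code_of_def by auto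
  have "\<not> ({pos AP k, pos T1 k} \<in> M \<and> {pos AM k, pos U1 k} \<in> M)"
  proof
    assume "{pos AP k, pos T1 k} \<in> M \<and> {pos AM k, pos U1 k} \<in> M"
    moreover note perfect_matching_subset[OF pm]
    ultimately have key: "state_key Left_sextet k \<subseteq> M" and kn: "k < n"
      using pyrene_E_interior_index[of "{pos AP k, pos T1 k}" n T1 k] by auto
    have "state_of M k = Left_sextet"
      using state_key_determines[OF pm kn key state_of_subset[OF pm kn]] by simp
    with free kn show False
      unfolding free_junction_def code_of_def by simp
  qed
  moreover have "\<not> (0 < k \<and> {pos T5 (k - 1), pos AP k} \<in> M \<and> {pos U5 (k - 1), pos AM k} \<in> M)"
  proof
    assume "0 < k \<and> {pos T5 (k - 1), pos AP k} \<in> M \<and> {pos U5 (k - 1), pos AM k} \<in> M"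
    then have key: "state_key Right_sextet (k - 1) \<subseteq> M" and kn: "k - 1 < n"
      using k by auto
    have "state_of M (k - 1) = Right_sextet"
      using state_key_determines[OF pm kn key state_of_subset[OF pm kn]] by simp
    with free kn \<open>0 < k \<and> _\<close> show False
      unfolding free_junction_def code_of_def by simp
  qed
  ultimately show ?thesis
    using aligned_junctions[OF pm k] unfolding aligned_junction_def by blast
qed

lemma matching_of_code_of_subset:
  assumes pm: "perfect_matching (pyrene_V n) (pyrene_E n) M"
  shows "matching_of (code_of n M) \<subseteq> M"
  using free_junction_code_of[OF pm] state_of_subset[OF pm]
  unfolding matching_of_def code_of_def by auto

lemma matching_of_code_of:
  assumes "perfect_matching (pyrene_V n) (pyrene_E n) M"
  shows "matching_of (code_of n M) = M"
  using perfect_matching_subset_eq[OF assms perfect_matching_matching_of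
      matching_of_code_of_subset[OF assms] pyrene_E_meets_V] code_of_admissible[OF assms]
  unfolding code_of_def by simp

lemma code_of_matching_of:
  assumes "admissible cs" "length cs = n"
  shows "code_of n (matching_of cs) = cs"
  using state_of_eq[OF perfect_matching_matching_of[OF assms] _ state_edges_subset_matching_of] assms(2)
  unfolding code_of_def by (simp add: list_eq_iff_nth_eq)

definition codes :: "nat \<Rightarrow> state list set" where
  "codes n = {cs. length cs = n \<and> admissible cs}"

lemma bij_betw_matching_of:
  "bij_betw matching_of (codes n) {M. perfect_matching (pyrene_V n) (pyrene_E n) M}"
  by (rule bij_betw_byWitness[where f' = "code_of n"])
    (auto simp: codes_def code_of_matching_of matching_of_code_of code_of_admissible
      perfect_matching_matching_of)

section \<open>Forcing numbers\<close>

fun weight :: "state \<Rightarrow> nat" where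
  "weight (Cut _ _) = 2"
| "weight Left_sextet = 1"
| "weight Right_sextet = 1"

lemma card_state_key: "card (state_key c j) \<le> weight c"
  by (cases c) (auto simp: card_insert_if)

definition forcing_key :: "state list \<Rightarrow> (int \<times> int) set set" where
  "forcing_key cs = (\<Union>j<length cs. state_key (cs ! j) j)"

lemma forcing_set_forcing_key:
  assumes "admissible cs" "length cs = n"
  shows "forcing_set (pyrene_V n) (pyrene_E n) (matching_of cs) (forcing_key cs)"
  unfolding forcing_set_def
proof (intro conjI allI impI)
  show "forcing_key cs \<subseteq> matching_of cs"
    unfolding forcing_key_def using state_key_subset state_edges_subset_matching_of by blast
  fix M assume "perfect_matching (pyrene_V n) (pyrene_E n) M \<and> forcing_key cs \<subseteq> M"
  then have pm: "perfect_matching (pyrene_V n) (pyrene_E n) M" and "forcing_key cs \<subseteq> M"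
    by simp_all
  have "state_of M j = cs ! j" if "j < n" for j
  proof -
    have "state_key (cs ! j) j \<subseteq> M"
      using \<open>forcing_key cs \<subseteq> M\<close> that assms(2) unfolding forcing_key_def by blast
    from state_key_determines[OF pm that this state_of_subset[OF pm that]] show ?thesis by simp
  qed
  then have "code_of n M = cs"
    using assms(2) unfolding code_of_def by (simp add: list_eq_iff_nth_eq)
  with matching_of_code_of[OF pm] show "M = matching_of cs" by simp
qed

lemma card_forcing_key: "card (forcing_key cs) \<le> (\<Sum>j<length cs. weight (cs ! j))"
proof -
  have "card (forcing_key cs) \<le> (\<Sum>j<length cs. card (state_key (cs ! j) j))"
    unfolding forcing_key_def by (rule card_UN_le) simp
  also have "\<dots> \<le> (\<Sum>j<length cs. weight (cs ! j))"
    by (intro sum_mono card_state_key)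
  finally show ?thesis .
qed

(* Indices of the alternating hexagons of a fragment: for Cut, True is s_{j+1,1} and False is
   s_{j+1,2}; a sextet state has only its sextet. *)
fun alternating_hexagons :: "state \<Rightarrow> bool set" where
  "alternating_hexagons (Cut _ _) = UNIV"
| "alternating_hexagons Left_sextet = {True}"
| "alternating_hexagons Right_sextet = {True}"

fun hexagon_edges :: "state \<Rightarrow> bool \<Rightarrow> nat \<Rightarrow> (int \<times> int) set set" where
  "hexagon_edges (Cut t b) upper j = (if upper then top_half t j else bottom_half b j)"
| "hexagon_edges Left_sextet _ j = {{pos AP j, pos T1 j}, {pos CP j, pos CM j}, {pos AM j, pos U1 j}}"
| "hexagon_edges Right_sextet _ j =
     {{pos T5 j, pos AP (Suc j)}, {pos CP j, pos CM j}, {pos U5 j, pos AM (Suc j)}}"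

fun rotate :: "state \<Rightarrow> bool \<Rightarrow> state" where
  "rotate (Cut t b) upper = (if upper then Cut (\<not> t) b else Cut t (\<not> b))"
| "rotate Left_sextet _ = Cut False False"
| "rotate Right_sextet _ = Cut True True"

lemma card_alternating_hexagons: "card (alternating_hexagons c) = weight c"
  by (cases c) simp_all

lemma rotate_is_Cut: "rotate c u \<noteq> Left_sextet" "rotate c u \<noteq> Right_sextet"
  by (cases c; simp)+

lemma rotate_neq: "rotate c u \<noteq> c"
  by (cases c) auto

lemma hexagon_edges_subset: "hexagon_edges c u j \<subseteq> state_edges c j"
  by (cases c) auto

lemma hexagon_edges_rotate:
  "u \<in> alternating_hexagons c \<Longrightarrow> state_edges c j - hexagon_edges c u j \<subseteq> state_edges (rotate c u) j"
  by (cases c rule: state_cases) (auto simp: top_half_def bottom_half_def)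

lemma hexagon_edges_disjoint:
  "u \<noteq> u' \<Longrightarrow> u \<in> alternating_hexagons c \<Longrightarrow> u' \<in> alternating_hexagons c \<Longrightarrow>
    hexagon_edges c u j \<inter> hexagon_edges c u' j = {}"
  by (cases c) (auto simp: top_half_def bottom_half_def)

lemma admissible_update:
  assumes "admissible cs" "c \<noteq> Left_sextet" "c \<noteq> Right_sextet"
  shows "admissible (cs[j := c])"
  using assms unfolding admissible_def successively_iff_nth
  by (cases "j < length cs") (auto simp: nth_list_update list_update_beyond)

lemma free_junction_update:
  assumes "free_junction cs k" "c \<noteq> Left_sextet" "c \<noteq> Right_sextet"
  shows "free_junction (cs[j := c]) k"
  using assms unfolding free_junction_def
  by (cases "j < length cs") (auto simp: nth_list_update list_update_beyond)

lemma matching_of_rotate: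
  assumes "j < length cs" "u \<in> alternating_hexagons (cs ! j)"
  shows "matching_of cs - hexagon_edges (cs ! j) u j \<subseteq> matching_of (cs[j := rotate (cs ! j) u])"
  using hexagon_edges_rotate[OF assms(2), of j] free_junction_update rotate_is_Cut assms(1)
  unfolding matching_of_def by (fastforce simp: nth_list_update)

lemma hexagon_edges_pairwise_disjoint:
  assumes "(j, u) \<in> (SIGMA j:{..<n}. alternating_hexagons (cs ! j))"
    "(j', u') \<in> (SIGMA j:{..<n}. alternating_hexagons (cs ! j))" "(j, u) \<noteq> (j', u')"
  shows "hexagon_edges (cs ! j) u j \<inter> hexagon_edges (cs ! j') u' j' = {}"
proof (cases "j = j'")
  case True
  with assms show ?thesis
    using hexagon_edges_disjoint[of u u' "cs ! j" j] by simp
next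
  case False
  then show ?thesis
    using state_edges_disjoint[OF False] hexagon_edges_subset by fastforce
qed

lemma rotated_matching_exists:
  assumes cs: "admissible cs" "length cs = n" and "j < n" "u \<in> alternating_hexagons (cs ! j)"
  shows "\<exists>M'. perfect_matching (pyrene_V n) (pyrene_E n) M' \<and> M' \<noteq> matching_of cs \<and>
           matching_of cs - hexagon_edges (cs ! j) u j \<subseteq> M'"
proof -
  define cs' where "cs' = cs[j := rotate (cs ! j) u]"
  have cs': "admissible cs'" "length cs' = n"
    unfolding cs'_def using admissible_update[OF cs(1) rotate_is_Cut] cs(2) by simp_all
  have "matching_of cs' \<noteq> matching_of cs"
  proof
    assume "matching_of cs' = matching_of cs"
    then have "cs' = cs"
      by (metis code_of_matching_of[OF cs'] code_of_matching_of[OF cs])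
    moreover have "cs' ! j = rotate (cs ! j) u"
      unfolding cs'_def using \<open>j < n\<close> cs(2) by simp
    ultimately show False
      using rotate_neq[of "cs ! j" u] by simp
  qed
  moreover have "matching_of cs - hexagon_edges (cs ! j) u j \<subseteq> matching_of cs'"
    unfolding cs'_def using matching_of_rotate assms(3,4) cs(2) by simp
  ultimately show ?thesis
    using perfect_matching_matching_of[OF cs'] by blast
qed

lemma sum_weight_le_card_forcing_set:
  assumes cs: "admissible cs" "length cs = n"
    and S: "forcing_set (pyrene_V n) (pyrene_E n) (matching_of cs) S"
  shows "(\<Sum>j<n. weight (cs ! j)) \<le> card S"
proof -
  let ?K = "SIGMA j:{..<n}. alternating_hexagons (cs ! j)"
  have "finite S"
    using S finite_matching_of unfolding forcing_set_def by (blast intro: finite_subset)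
  have "card ?K \<le> card S"
  proof (rule card_le_forcing_set[OF \<open>finite S\<close> S, where D = "\<lambda>(j, u). hexagon_edges (cs ! j) u j"])
    show "finite ?K" by simp
    show "\<forall>k\<in>?K. \<forall>k'\<in>?K. k \<noteq> k' \<longrightarrow>
        (case k of (j, u) \<Rightarrow> hexagon_edges (cs ! j) u j) \<inter> (case k' of (j, u) \<Rightarrow> hexagon_edges (cs ! j) u j) = {}"
      using hexagon_edges_pairwise_disjoint by fast
  qed (use rotated_matching_exists[OF cs] in auto)
  then show ?thesis
    by (simp add: card_alternating_hexagons)
qed

lemma forcing_number_matching_of:
  assumes "admissible cs" "length cs = n"
  shows "forcing_number (pyrene_V n) (pyrene_E n) (matching_of cs) = sum_list (map weight cs)"
proof -
  note key = forcing_set_forcing_key[OF assms]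
  have "card (forcing_key cs) = (\<Sum>j<n. weight (cs ! j))"
    using card_forcing_key[of cs] sum_weight_le_card_forcing_set[OF assms key] assms(2) by simp
  moreover have "forcing_number (pyrene_V n) (pyrene_E n) (matching_of cs) = card (forcing_key cs)"
    using sum_weight_le_card_forcing_set[OF assms] calculation
    by (intro forcing_number_eqI[OF finite_matching_of key]) simp
  ultimately show ?thesis
    using assms(2) by (simp add: sum_list_sum_nth atLeast0LessThan)
qed

section \<open>Counting admissible codes\<close>

definition starts_left :: "state list \<Rightarrow> bool" where
  "starts_left cs \<longleftrightarrow> cs \<noteq> [] \<and> hd cs = Left_sextet"

lemma admissible_Cons:
  "admissible (c # cs) \<longleftrightarrow> admissible cs \<and> (c = Right_sextet \<longrightarrow> \<not> starts_left cs)"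
  unfolding admissible_def starts_left_def by (auto simp: successively_Cons)

lemma codes_0: "codes 0 = {[]}"
  unfolding codes_def admissible_def by auto

lemma finite_codes: "finite (codes n)"
proof -
  have "c \<in> {Cut False False, Cut False True, Cut True False, Cut True True, Left_sextet, Right_sextet}"
    for c
    by (cases c rule: state_cases) simp_all
  then have "codes n \<subseteq> {cs. set cs \<subseteq> {Cut False False, Cut False True, Cut True False, Cut True True,
      Left_sextet, Right_sextet} \<and> length cs = n}"
    unfolding codes_def by blast
  then show ?thesis
    by (rule finite_subset) (simp add: finite_lists_length_eq)
qed

lemma codes_Suc_starts_left:
  "{cs \<in> codes (Suc n). starts_left cs} = Cons Left_sextet ` codes n"
proof (intro set_eqI iffI)
  fix cs assume "cs \<in> {cs \<in> codes (Suc n). starts_left cs}"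
  then show "cs \<in> Cons Left_sextet ` codes n"
    by (cases cs) (auto simp: codes_def starts_left_def admissible_Cons)
qed (auto simp: codes_def starts_left_def admissible_Cons)

lemma codes_Suc_not_starts_left:
  "{cs \<in> codes (Suc n). \<not> starts_left cs} =
     (\<lambda>(t, b, cs). Cut t b # cs) ` (UNIV \<times> UNIV \<times> codes n) \<union>
     Cons Right_sextet ` {cs \<in> codes n. \<not> starts_left cs}"
proof (intro set_eqI iffI)
  fix cs assume "cs \<in> {cs \<in> codes (Suc n). \<not> starts_left cs}"
  then obtain c cs' where "cs = c # cs'" "cs' \<in> codes n" "c \<noteq> Left_sextet"
      "c = Right_sextet \<longrightarrow> \<not> starts_left cs'"
    by (cases cs) (auto simp: codes_def starts_left_def admissible_Cons)
  then show "cs \<in> (\<lambda>(t, b, cs). Cut t b # cs) ` (UNIV \<times> UNIV \<times> codes n) \<union>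
      Cons Right_sextet ` {cs \<in> codes n. \<not> starts_left cs}"
  proof (cases c)
    case (Cut t b)
    with \<open>cs = c # cs'\<close> have "cs = (\<lambda>(t, b, cs). Cut t b # cs) (t, b, cs')"
      by simp
    with \<open>cs' \<in> codes n\<close> show ?thesis by blast
  qed auto
qed (auto simp: codes_def starts_left_def admissible_Cons)

definition code_sum :: "nat \<Rightarrow> bool \<Rightarrow> (state list \<Rightarrow> real) \<Rightarrow> real" where
  "code_sum n l g = (\<Sum>cs | cs \<in> codes n \<and> starts_left cs = l. g cs)"

lemma sum_codes_eq_code_sum: "(\<Sum>cs\<in>codes n. g cs) = code_sum n False g + code_sum n True g"
proof -
  have "codes n = {cs \<in> codes n. starts_left cs = False} \<union> {cs \<in> codes n. starts_left cs = True}"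
    by auto
  then show ?thesis
    unfolding code_sum_def using finite_codes[of n]
    by (simp add: sum.union_disjoint[symmetric] Collect_conj_eq[symmetric])
qed

lemma code_sum_Suc_True: "code_sum (Suc n) True g = (\<Sum>cs\<in>codes n. g (Left_sextet # cs))"
  unfolding code_sum_def using codes_Suc_starts_left[of n]
  by (simp add: sum.reindex)

lemma code_sum_Suc_False:
  "code_sum (Suc n) False g =
     (\<Sum>cs\<in>codes n. g (Cut False False # cs) + g (Cut False True # cs) + g (Cut True False # cs)
       + g (Cut True True # cs)) + code_sum n False (\<lambda>cs. g (Right_sextet # cs))"
proof -
  have inj: "inj_on (\<lambda>(t, b, cs). Cut t b # cs) (UNIV \<times> UNIV \<times> codes n)"
    by (auto simp: inj_on_def)
  have "code_sum (Suc n) False g =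
      sum g ((\<lambda>(t, b, cs). Cut t b # cs) ` (UNIV \<times> UNIV \<times> codes n) \<union>
        Cons Right_sextet ` {cs \<in> codes n. \<not> starts_left cs})"
    unfolding code_sum_def codes_Suc_not_starts_left[symmetric] by simp
  also have "\<dots> = sum g ((\<lambda>(t, b, cs). Cut t b # cs) ` (UNIV \<times> UNIV \<times> codes n)) +
      sum g (Cons Right_sextet ` {cs \<in> codes n. \<not> starts_left cs})"
    by (rule sum.union_disjoint) (use finite_codes in auto)
  also have "sum g ((\<lambda>(t, b, cs). Cut t b # cs) ` (UNIV \<times> UNIV \<times> codes n)) =
      (\<Sum>(t, b, cs)\<in>UNIV \<times> UNIV \<times> codes n. g (Cut t b # cs))"
    by (subst sum.reindex[OF inj]) (simp add: case_prod_unfold)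
  also have "\<dots> = (\<Sum>t\<in>UNIV. \<Sum>b\<in>UNIV. \<Sum>cs\<in>codes n. g (Cut t b # cs))"
    by (simp add: sum.cartesian_product)
  also have "\<dots> = (\<Sum>cs\<in>codes n. g (Cut False False # cs) + g (Cut False True # cs)
      + g (Cut True False # cs) + g (Cut True True # cs))"
    by (simp add: UNIV_bool sum.distrib)
  also have "sum g (Cons Right_sextet ` {cs \<in> codes n. \<not> starts_left cs}) =
      code_sum n False (\<lambda>cs. g (Right_sextet # cs))"
    unfolding code_sum_def by (simp add: sum.reindex)
  finally show ?thesis .
qed

(* 3 +- 2 sqrt 2 are the eigenvalues of the transfer matrix ((5, 4), (1, 1)) of (x, y). *)
lemma recurrence_closed_form:
  fixes x y a b :: "nat \<Rightarrow> real"
  assumes "x 0 = 1" "y 0 = 0" "a 0 = 0" "b 0 = 0"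
    and "\<And>n. x (Suc n) = 5 * x n + 4 * y n" "\<And>n. y (Suc n) = x n + y n"
    and "\<And>n. a (Suc n) = 9 * x n + 8 * y n + 5 * a n + 4 * b n"
    and "\<And>n. b (Suc n) = x n + y n + a n + b n"
  shows "a n + b n =
      sqrt 2 / 32 * (3 - 2 * sqrt 2) ^ n
    + (7 - 5 * sqrt 2) / 8 * real n * (3 - 2 * sqrt 2) ^ n
    - sqrt 2 / 32 * (3 + 2 * sqrt 2) ^ n
    + (7 + 5 * sqrt 2) / 8 * real n * (3 + 2 * sqrt 2) ^ n"
proof -
  define s where "s = sqrt 2"
  have s2: "s * s = 2"
    unfolding s_def by simp
  have "x n = (1/2 + s/4) * (3 + 2*s)^n + (1/2 - s/4) * (3 - 2*s)^n \<and>
        y n = s/8 * (3 + 2*s)^n - s/8 * (3 - 2*s)^n \<and>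
        a n = s/16 * (3 + 2*s)^n - s/16 * (3 - 2*s)^n
              + (3/4 + s/2) * n * (3 + 2*s)^n + (3/4 - s/2) * n * (3 - 2*s)^n \<and>
        b n = - (3*s/32) * (3 + 2*s)^n + 3*s/32 * (3 - 2*s)^n
              + (1/8 + s/8) * n * (3 + 2*s)^n + (1/8 - s/8) * n * (3 - 2*s)^n"
  proof (induction n)
    case 0
    then show ?case using assms(1-4) by simp
  next
    case (Suc n)
    have s2': "s * (s * z) = 2 * z" for z
      using s2 by (simp add: mult.assoc[symmetric])
    from Suc.IH show ?case
      unfolding assms(5-8) by (simp add: field_simps s2')
  qed
  then show ?thesis
    unfolding s_def[symmetric] by (simp add: field_simps)
qed

lemma sum_codes_weight:
  "(\<Sum>cs\<in>codes n. real (sum_list (map weight cs))) =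
      sqrt 2 / 32 * (3 - 2 * sqrt 2) ^ n
    + (7 - 5 * sqrt 2) / 8 * real n * (3 - 2 * sqrt 2) ^ n
    - sqrt 2 / 32 * (3 + 2 * sqrt 2) ^ n
    + (7 + 5 * sqrt 2) / 8 * real n * (3 + 2 * sqrt 2) ^ n"
proof -
  define w where "w cs = real (sum_list (map weight cs))" for cs
  define x where "x m = code_sum m False (\<lambda>_. 1)" for m
  define y where "y m = code_sum m True (\<lambda>_. 1)" for m
  define a where "a m = code_sum m False w" for m
  define b where "b m = code_sum m True w" for m
  have count: "(\<Sum>cs\<in>codes m. 1) = x m + y m" for m
    unfolding x_def y_def by (rule sum_codes_eq_code_sum)
  have total: "(\<Sum>cs\<in>codes m. w cs) = a m + b m" for m
    unfolding a_def b_def by (rule sum_codes_eq_code_sum)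
  have "code_sum m False (\<lambda>cs. 1 + w cs) = x m + a m" for m
    unfolding x_def a_def code_sum_def by (simp add: sum.distrib)
  moreover have w_Cons: "w (c # cs) = weight c + w cs" for c cs
    unfolding w_def by simp
  ultimately have "a (Suc m) = 9 * x m + 8 * y m + 5 * a m + 4 * b m" for m
    unfolding a_def code_sum_Suc_False
    using count[of m] total[of m] by (simp add: sum.distrib sum_distrib_left[symmetric] a_def x_def)
  moreover have "b (Suc m) = x m + y m + a m + b m" for m
    unfolding b_def code_sum_Suc_True using count[of m] total[of m] w_Cons
    by (simp add: sum.distrib b_def)
  moreover have "x (Suc m) = 5 * x m + 4 * y m" for m
    unfolding x_def code_sum_Suc_False using count[of m] by (simp add: x_def)
  moreover have "y (Suc m) = x m + y m" for m
    unfolding y_def code_sum_Suc_True using count[of m] by (simp add: y_def)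
  moreover have "{cs \<in> codes 0. P cs} = (if P [] then {[]} else {})" for P
    by (auto simp: codes_0)
  then have "x 0 = 1" "y 0 = 0" "a 0 = 0" "b 0 = 0"
    unfolding x_def y_def a_def b_def code_sum_def by (simp_all add: w_def starts_left_def)
  ultimately show ?thesis
    using total[of n] recurrence_closed_form[of x y a b n] unfolding w_def by simp
qed

theorem theorem3p4:
  fixes n :: nat
  shows "real (IDF (pyrene_V n) (pyrene_E n)) =
      sqrt 2 / 32 * (3 - 2 * sqrt 2) ^ n
    + (7 - 5 * sqrt 2) / 8 * real n * (3 - 2 * sqrt 2) ^ n
    - sqrt 2 / 32 * (3 + 2 * sqrt 2) ^ n
    + (7 + 5 * sqrt 2) / 8 * real n * (3 + 2 * sqrt 2) ^ n"
proof -
  have "IDF (pyrene_V n) (pyrene_E n) =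
      (\<Sum>cs\<in>codes n. forcing_number (pyrene_V n) (pyrene_E n) (matching_of cs))"
    unfolding IDF_def by (rule sum.reindex_bij_betw[OF bij_betw_matching_of, symmetric])
  also have "\<dots> = (\<Sum>cs\<in>codes n. sum_list (map weight cs))"
    by (rule sum.cong) (auto simp: codes_def forcing_number_matching_of)
  finally show ?thesis
    using sum_codes_weight[of n] by simp
qed

end
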